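(* Let $p$ be a prime, $d$ a positive integer, and $\alpha>1-\frac{1}{d}\left(1-\frac{1}{p}\right)$. Let $S\subseteq\{1,2,\dots,p\}$ with $|S|\ge\alpha p$, and let $A=S+p\mathbb{Z}=\{s+pn : s\in S,\ n\in\mathbb{Z}\}$. Then \[h(A^d)\le |S|^d.\]
   Context: For a set $X\subseteq\mathbb{R}^d$, the Helly number $h(X)$ is the smallest $h$ such that the following holds: for every finite family $\mathcal{F}$ of convex sets in $\mathbb{R}^d$, if every $h$ or fewer sets of $\mathcal{F}$ have a point of $X$ in their intersection, then the intersection of all sets of $\mathcal{F}$ contains a point of $X$. If no such $h$ exists, $h(X)=\infty$. $A^d$ denotes the $d$-fold Cartesian product of $A$. *)

theory Defs
  imports "HOL-Analysis.Analysis" "HOL-Library.Extended_Nat"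
begin

definition helly_prop :: "'a::real_vector set \<Rightarrow> nat \<Rightarrow> bool" where
  "helly_prop X h \<longleftrightarrow>
     (\<forall>F. finite F \<and> (\<forall>C\<in>F. convex C) \<longrightarrow>
        (\<forall>G. G \<subseteq> F \<and> card G \<le> h \<longrightarrow> \<Inter>G \<inter> X \<noteq> {}) \<longrightarrow> \<Inter>F \<inter> X \<noteq> {})"

definition helly_number :: "'a::real_vector set \<Rightarrow> enat" where
  "helly_number X = (INF h \<in> {h. helly_prop X h}. enat h)"

text \<open>d-fold Cartesian power of a set of reals, inside real^'n with d = CARD('n).\<close>
definition cart_power :: "real set \<Rightarrow> (real^'n) set" where
  "cart_power A = {x. \<forall>i. x $ i \<in> A}"

end

theory Submission
  imports Defs
begin

(* Doignon's parity argument. Say that X has the segment property for k if among any more than k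
  of its points there are two whose open segment contains a point of X. A discrete X with this
  property has Helly number at most k: take a family F with more than k members all of whose
  proper subfamilies meet X, pick a point x_C of X in the intersection of F - {C} for each C, and
  let T be the finite set of points of X in the convex hull of these. If the whole family missed X,
  each t in T could be cut off by a hyperplane from some member of F; this gives a system of strict
  linear inequalities, indexed by T, with no solution in T although any k of them are satisfied by
  some x_C. Raising the right-hand sides of a minimal unsolvable such system as far as possible
  makes each constraint tight at a point of T satisfying all the others; two of these more than k
  points have a point of T between them, and that point satisfies every constraint.

  For X = A^d, among more than |S|^d points two agree in every coordinate modulo p, so they are
  u and u + p v with integral u, v. The points u + j v, 0 < j < p, lie on the open segment, and
  for each coordinate at most p - |S| values of j leave A; the density hypothesis amounts to
  d (p - |S|) < p - 1, so some j keeps every coordinate in A. *)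

definition solvable_in :: "'a::real_inner set \<Rightarrow> ('i \<Rightarrow> 'a) \<Rightarrow> ('i \<Rightarrow> real) \<Rightarrow> 'i set \<Rightarrow> bool" where
  "solvable_in T a c J \<longleftrightarrow> (\<exists>t\<in>T. \<forall>j\<in>J. a j \<bullet> t < c j)"

definition segment_property :: "'a::real_vector set \<Rightarrow> nat \<Rightarrow> bool" where
  "segment_property X k \<longleftrightarrow>
     (\<forall>Z\<subseteq>X. k < card Z \<longrightarrow> (\<exists>z1\<in>Z. \<exists>z2\<in>Z. open_segment z1 z2 \<inter> X \<noteq> {}))"

lemma segment_property_Int_convex:
  assumes "segment_property X k" and "convex P"
  shows "segment_property (P \<inter> X) k"
  unfolding segment_property_def
proof (intro allI impI)
  fix Z assume Z: "Z \<subseteq> P \<inter> X" and "k < card Z"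
  then obtain z1 z2 where z: "z1 \<in> Z" "z2 \<in> Z" "open_segment z1 z2 \<inter> X \<noteq> {}"
    using assms(1) unfolding segment_property_def by blast
  have "open_segment z1 z2 \<subseteq> P"
    using z Z assms(2) convex_contains_open_segment by blast
  then show "\<exists>z1\<in>Z. \<exists>z2\<in>Z. open_segment z1 z2 \<inter> (P \<inter> X) \<noteq> {}"
    using z by blast
qed

lemma solvable_in_mono:
  assumes "solvable_in T a c J" and "\<And>j. j \<in> J \<Longrightarrow> c j \<le> e j"
  shows "solvable_in T a e J"
  using assms unfolding solvable_in_def by (meson less_le_trans)

lemma tight_point_if_maximal:
  fixes a :: "'i \<Rightarrow> 'a::real_inner"
  assumes "finite T" and "i \<in> J"
    and unsolvable: "\<not> solvable_in T a e J"
    and "solvable_in T a e (J - {i})"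
    and maximal: "\<And>y. y \<in> (\<bullet>) (a i) ` T \<Longrightarrow> e i < y \<Longrightarrow> solvable_in T a (e(i := y)) J"
  obtains z where "z \<in> T" and "a i \<bullet> z = e i" and "\<forall>j\<in>J - {i}. a j \<bullet> z < e j"
proof -
  define T\<^sub>i where "T\<^sub>i = {t\<in>T. \<forall>j\<in>J - {i}. a j \<bullet> t < e j}"
  have "finite T\<^sub>i"
    using assms(1) unfolding T\<^sub>i_def by simp
  moreover have "T\<^sub>i \<noteq> {}"
    using assms(4) unfolding T\<^sub>i_def solvable_in_def by blast
  ultimately obtain m where "m \<in> T\<^sub>i" and m_min: "\<forall>t\<in>T\<^sub>i. a i \<bullet> m \<le> a i \<bullet> t"
    using ex_is_arg_min_if_finite[of T\<^sub>i "(\<bullet>) (a i)"] unfolding is_arg_min_linorder by blast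
  then have m: "m \<in> T" "\<forall>j\<in>J - {i}. a j \<bullet> m < e j"
    unfolding T\<^sub>i_def by auto
  have "e i \<le> a i \<bullet> m"
  proof (rule ccontr)
    assume "\<not> e i \<le> a i \<bullet> m"
    then have "\<forall>j\<in>J. a j \<bullet> m < e j"
      using m(2) by (metis DiffI not_le singletonD)
    then show False
      using unsolvable m(1) unfolding solvable_in_def by blast
  qed
  moreover have "\<not> e i < a i \<bullet> m"
  proof
    assume "e i < a i \<bullet> m"
    then obtain t where "t \<in> T" and t: "\<forall>j\<in>J. a j \<bullet> t < (e(i := a i \<bullet> m)) j"
      using maximal m(1) unfolding solvable_in_def by blast
    have "a j \<bullet> t < e j" if "j \<in> J - {i}" for j
      using t[rule_format, of j] that by auto
    then have "a i \<bullet> m \<le> a i \<bullet> t"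
      using m_min \<open>t \<in> T\<close> unfolding T\<^sub>i_def by blast
    moreover have "a i \<bullet> t < a i \<bullet> m"
      using t assms(2) by fastforce
    ultimately show False
      by simp
  qed
  ultimately have "a i \<bullet> m = e i"
    by simp
  with m show thesis
    using that by blast
qed

lemma critical_system_tight_points:
  fixes a :: "'i \<Rightarrow> 'a::real_inner"
  assumes "finite T" and "finite J"
    and unsolvable: "\<not> solvable_in T a c J"
    and critical: "\<And>i. i \<in> J \<Longrightarrow> solvable_in T a c (J - {i})"
  obtains e z where "\<not> solvable_in T a e J"
    and "\<And>i. i \<in> J \<Longrightarrow> z i \<in> T \<and> a i \<bullet> z i = e i"
    and "\<And>i j. i \<in> J \<Longrightarrow> j \<in> J - {i} \<Longrightarrow> a j \<bullet> z i < e j"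
proof -
  \<comment> \<open>The search for a sum-maximal unsolvable right-hand side can be restricted to the finite
    grid of the values c j and a j \<bullet> t (t \<in> T), the only thresholds where solvability changes.\<close>
  define V where "V j = insert (c j) ((\<bullet>) (a j) ` T)" for j
  define \<Omega> where "\<Omega> = {e \<in> PiE J V. (\<forall>j\<in>J. c j \<le> e j) \<and> \<not> solvable_in T a e J}"
  have "finite \<Omega>"
    unfolding \<Omega>_def V_def using assms(1,2) by (simp add: finite_PiE)
  moreover have "restrict c J \<in> \<Omega>"
    using unsolvable unfolding \<Omega>_def V_def solvable_in_def by (simp add: restrict_PiE_iff)
  ultimately obtain e where "e \<in> \<Omega>" and e_max: "\<forall>e'\<in>\<Omega>. sum e' J \<le> sum e J"
    using ex_is_arg_min_if_finite[of \<Omega> "\<lambda>e. - sum e J"] unfolding is_arg_min_linorder by force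
  then have e_grid: "e \<in> PiE J V" and e_ge: "\<forall>j\<in>J. c j \<le> e j"
    and e_unsolvable: "\<not> solvable_in T a e J"
    unfolding \<Omega>_def by simp_all
  have "\<exists>z\<in>T. a i \<bullet> z = e i \<and> (\<forall>j\<in>J - {i}. a j \<bullet> z < e j)" if "i \<in> J" for i
  proof (rule tight_point_if_maximal[OF assms(1) that e_unsolvable])
    show "solvable_in T a e (J - {i})"
      using solvable_in_mono[OF critical[OF that]] e_ge by blast
    fix y assume y: "y \<in> (\<bullet>) (a i) ` T" "e i < y"
    show "solvable_in T a (e(i := y)) J"
    proof (rule ccontr)
      assume "\<not> solvable_in T a (e(i := y)) J"
      moreover have "e(i := y) \<in> PiE J V"
        using PiE_fun_upd[of y V i e J] y(1) e_grid that by (simp add: V_def insert_absorb)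
      moreover have "\<forall>j\<in>J. c j \<le> (e(i := y)) j"
        using e_ge y(2) that by fastforce
      ultimately have "sum (e(i := y)) J \<le> sum e J"
        using e_max unfolding \<Omega>_def by blast
      moreover have "sum (e(i := y)) J = y + sum e (J - {i})"
        using assms(2) that by (simp add: sum.remove)
      moreover have "sum e J = e i + sum e (J - {i})"
        using assms(2) that by (simp add: sum.remove)
      ultimately show False
        using y(2) by simp
    qed
  qed blast
  then show thesis
    using that e_unsolvable by metis
qed

lemma solvable_if_deletions_solvable:
  fixes a :: "'i \<Rightarrow> 'a::real_inner"
  assumes "finite T" and "segment_property T k" and "finite J" and "k < card J"
    and "\<And>i. i \<in> J \<Longrightarrow> solvable_in T a c (J - {i})"
  shows "solvable_in T a c J"
proof (rule ccontr)
  assume "\<not> solvable_in T a c J"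
  then obtain e z where e_unsolvable: "\<not> solvable_in T a e J"
    and z: "\<And>i. i \<in> J \<Longrightarrow> z i \<in> T \<and> a i \<bullet> z i = e i"
    and z_strict: "\<And>i j. i \<in> J \<Longrightarrow> j \<in> J - {i} \<Longrightarrow> a j \<bullet> z i < e j"
    using critical_system_tight_points[OF assms(1,3)] assms(5) by metis
  have z_le: "a j \<bullet> z i \<le> e j" if "i \<in> J" "j \<in> J" for i j
    using z z_strict that by (metis DiffI order.order_iff_strict singletonD)
  have "inj_on z J"
    using z z_strict by (metis DiffI inj_onI less_irrefl singletonD)
  then have "k < card (z ` J)"
    using assms(4) by (simp add: card_image)
  moreover have "z ` J \<subseteq> T"
    using z by blast
  ultimately obtain i1 i2 w where i: "i1 \<in> J" "i2 \<in> J" and "w \<in> T"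
    and w: "w \<in> open_segment (z i1) (z i2)"
    using assms(2) unfolding segment_property_def by blast
  then obtain \<theta> where "i1 \<noteq> i2" and \<theta>: "0 < \<theta>" "\<theta> < 1"
    and w_eq: "w = (1 - \<theta>) *\<^sub>R z i1 + \<theta> *\<^sub>R z i2"
    unfolding in_segment by auto
  have "a j \<bullet> w < e j" if "j \<in> J" for j
  proof -
    have w_j: "a j \<bullet> w = (1 - \<theta>) * (a j \<bullet> z i1) + \<theta> * (a j \<bullet> z i2)"
      unfolding w_eq by (simp add: inner_add_right)
    have le1: "(1 - \<theta>) * (a j \<bullet> z i1) \<le> (1 - \<theta>) * e j"
      and le2: "\<theta> * (a j \<bullet> z i2) \<le> \<theta> * e j"
      using z_le[OF i(1) that] z_le[OF i(2) that] \<theta> by simp_all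
    have "a j \<bullet> z i1 < e j \<or> a j \<bullet> z i2 < e j"
      using z_strict i that \<open>i1 \<noteq> i2\<close> by blast
    then have "(1 - \<theta>) * (a j \<bullet> z i1) < (1 - \<theta>) * e j \<or> \<theta> * (a j \<bullet> z i2) < \<theta> * e j"
      using \<theta> by auto
    then show ?thesis
      using w_j le1 le2 by (auto simp: algebra_simps)
  qed
  then show False
    using e_unsolvable \<open>w \<in> T\<close> unfolding solvable_in_def by blast
qed

lemma solvable_if_small_subsystems_solvable:
  fixes a :: "'i \<Rightarrow> 'a::real_inner"
  assumes "finite T" and "segment_property T k" and "finite I"
    and "\<And>U. U \<subseteq> I \<Longrightarrow> card U \<le> k \<Longrightarrow> solvable_in T a c U"
  shows "solvable_in T a c I"
  using assms(3,4)
proof (induction I rule: finite_psubset_induct)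
  case (psubset I)
  show ?case
  proof (cases "card I \<le> k")
    case True
    then show ?thesis
      using psubset.prems by blast
  next
    case False
    have "solvable_in T a c (I - {i})" if "i \<in> I" for i
      using psubset.IH[of "I - {i}"] psubset.prems that by blast
    then show ?thesis
      using solvable_if_deletions_solvable[OF assms(1,2) psubset.hyps] False by simp
  qed
qed

lemma separating_hyperplane_point_finite_subset:
  fixes t :: "'a::euclidean_space"
  assumes "finite Y" and "convex C" and "Y \<subseteq> C" and "t \<notin> C"
  obtains a b where "a \<bullet> t < b" and "\<forall>y\<in>Y. b < a \<bullet> y"
proof -
  have "convex hull Y \<subseteq> C"
    using assms(2,3) by (simp add: hull_minimal)
  moreover have "closed (convex hull Y)"
    using assms(1) by (simp add: compact_imp_closed finite_imp_compact_convex_hull)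
  ultimately obtain a b where "a \<bullet> t < b" and "\<forall>y\<in>convex hull Y. b < a \<bullet> y"
    using separating_hyperplane_closed_point[of "convex hull Y" t] assms(4) by auto
  then show thesis
    using that hull_subset[of Y convex] by blast
qed

lemma finite_bounded_Int_uniform_discrete:
  fixes X :: "'a::heine_borel set"
  assumes "uniform_discrete X" and "bounded P"
  shows "finite (P \<inter> X)"
  using assms uniform_discrete_finite_iff uniform_discrete_subset bounded_subset
  by (metis inf_le1 inf_le2)

lemma separating_hyperplanes_of_missed_points:
  fixes T :: "'a::euclidean_space set"
  assumes "finite T" and "\<forall>C\<in>F. convex C" and "\<And>t. t \<in> T \<Longrightarrow> \<exists>C\<in>F. t \<notin> C"
  obtains C A B
    where "\<And>t. t \<in> T \<Longrightarrow> C t \<in> F \<and> A t \<bullet> t < B t \<and> (\<forall>y\<in>C t \<inter> T. B t < A t \<bullet> y)"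
proof -
  have "\<exists>C a b. C \<in> F \<and> a \<bullet> t < b \<and> (\<forall>y\<in>C \<inter> T. b < a \<bullet> y)" if t: "t \<in> T" for t
  proof -
    obtain C where "C \<in> F" and "t \<notin> C"
      using assms(3)[OF t] by blast
    moreover have "finite (C \<inter> T)"
      using assms(1) by simp
    moreover have "convex C"
      using assms(2) \<open>C \<in> F\<close> by simp
    ultimately obtain a b where "a \<bullet> t < b" and "\<forall>y\<in>C \<inter> T. b < a \<bullet> y"
      using separating_hyperplane_point_finite_subset[of "C \<inter> T" C t] by auto
    with \<open>C \<in> F\<close> show ?thesis
      by blast
  qed
  then show thesis
    using that by metis
qed

lemma solvable_in_if_fewer_constraints_than_members:
  fixes A :: "'i \<Rightarrow> 'a::real_inner"
  assumes "finite U" and "card U < card F"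
    and x: "\<And>D. D \<in> F \<Longrightarrow> x D \<in> T \<and> x D \<in> \<Inter>(F - {D})"
    and C: "\<And>u. u \<in> U \<Longrightarrow> C u \<in> F \<and> (\<forall>y\<in>C u \<inter> T. B u < A u \<bullet> y)"
  shows "solvable_in T (\<lambda>u. - A u) (\<lambda>u. - B u) U"
proof -
  have "card (C ` U) < card F"
    using card_image_le[OF assms(1), of C] assms(2) by linarith
  then have "\<not> F \<subseteq> C ` U"
    using card_mono[OF finite_imageI[OF assms(1)]] by (meson not_le)
  then obtain D where "D \<in> F" and "D \<notin> C ` U"
    by blast
  have "- A u \<bullet> x D < - B u" if "u \<in> U" for u
  proof -
    have "C u \<in> F - {D}"
      using C[OF that] \<open>D \<notin> C ` U\<close> that by blast
    then have "x D \<in> C u \<inter> T"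
      using x[OF \<open>D \<in> F\<close>] by blast
    then show ?thesis
      using C[OF that] by simp
  qed
  then show ?thesis
    using x[OF \<open>D \<in> F\<close>] unfolding solvable_in_def by blast
qed

lemma Inter_Int_nonempty_if_deletions_nonempty:
  fixes X :: "'a::euclidean_space set"
  assumes "uniform_discrete X" and "segment_property X k"
    and "finite F" and convex: "\<forall>C\<in>F. convex C" and "k < card F"
    and "\<And>C. C \<in> F \<Longrightarrow> \<Inter>(F - {C}) \<inter> X \<noteq> {}"
  shows "\<Inter>F \<inter> X \<noteq> {}"
proof
  assume empty: "\<Inter>F \<inter> X = {}"
  have "\<exists>y. y \<in> \<Inter>(F - {C}) \<inter> X" if "C \<in> F" for C
    using assms(6)[OF that] by (rule ex_in_conv[THEN iffD2])
  then obtain x where x: "\<And>C. C \<in> F \<Longrightarrow> x C \<in> \<Inter>(F - {C}) \<inter> X"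
    by metis
  define T where "T = convex hull (x ` F) \<inter> X"
  have "bounded (convex hull (x ` F))"
    using assms(3) by (simp add: compact_imp_bounded finite_imp_compact_convex_hull)
  then have "finite T"
    unfolding T_def by (rule finite_bounded_Int_uniform_discrete[OF assms(1)])
  have x_T: "x C \<in> T \<and> x C \<in> \<Inter>(F - {C})" if "C \<in> F" for C
    using x[OF that] hull_inc[of "x C" "x ` F"] that unfolding T_def by simp
  \<comment> \<open>One strict constraint per point t of T: lie beyond the hyperplane cutting t off from C t.
    No point of T satisfies its own constraint, but x D satisfies all those with C t \<noteq> D.\<close>
  have missed: "\<exists>C\<in>F. t \<notin> C" if "t \<in> T" for t
    using empty that unfolding T_def by auto
  obtain C A B
    where CAB: "\<And>t. t \<in> T \<Longrightarrow> C t \<in> F \<and> A t \<bullet> t < B t \<and> (\<forall>y\<in>C t \<inter> T. B t < A t \<bullet> y)"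
    using separating_hyperplanes_of_missed_points[OF \<open>finite T\<close> convex missed] by blast
  have "solvable_in T (\<lambda>t. - A t) (\<lambda>t. - B t) T"
  proof (rule solvable_if_small_subsystems_solvable[OF \<open>finite T\<close> _ \<open>finite T\<close>])
    show "segment_property T k"
      unfolding T_def using assms(2) by (simp add: segment_property_Int_convex)
    fix U assume "U \<subseteq> T" and "card U \<le> k"
    have "finite U"
      using \<open>U \<subseteq> T\<close> \<open>finite T\<close> by (rule finite_subset)
    moreover have "card U < card F"
      using \<open>card U \<le> k\<close> assms(5) by linarith
    moreover have "C u \<in> F \<and> (\<forall>y\<in>C u \<inter> T. B u < A u \<bullet> y)" if "u \<in> U" for u
      using CAB \<open>U \<subseteq> T\<close> that by blast
    ultimately show "solvable_in T (\<lambda>t. - A t) (\<lambda>t. - B t) U"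
      by (intro solvable_in_if_fewer_constraints_than_members[OF _ _ x_T])
  qed
  then obtain y where "y \<in> T" and "- A y \<bullet> y < - B y"
    unfolding solvable_in_def by blast
  then show False
    using CAB[OF \<open>y \<in> T\<close>] by simp
qed

lemma helly_prop_if_segment_property:
  fixes X :: "'a::euclidean_space set"
  assumes "uniform_discrete X" and "segment_property X k"
  shows "helly_prop X k"
  unfolding helly_prop_def
proof (intro allI impI)
  fix F :: "'a set set"
  assume "finite F \<and> (\<forall>C\<in>F. convex C)" and small: "\<forall>G. G \<subseteq> F \<and> card G \<le> k \<longrightarrow> \<Inter>G \<inter> X \<noteq> {}"
  then have "finite F" and "\<forall>C\<in>F. convex C"
    by simp_all
  then show "\<Inter>F \<inter> X \<noteq> {}"
    using small
  proof (induction F rule: finite_psubset_induct)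
    case (psubset F)
    show ?case
    proof (cases "card F \<le> k")
      case True
      then show ?thesis
        using psubset.prems(2) by blast
    next
      case False
      have "\<Inter>(F - {C}) \<inter> X \<noteq> {}" if "C \<in> F" for C
      proof (rule psubset.IH)
        show "F - {C} \<subset> F"
          using that by blast
        show "\<forall>C'\<in>F - {C}. convex C'"
          using psubset.prems(1) by blast
        show "\<forall>G. G \<subseteq> F - {C} \<and> card G \<le> k \<longrightarrow> \<Inter>G \<inter> X \<noteq> {}"
          using psubset.prems(2) by blast
      qed
      then show ?thesis
        using Inter_Int_nonempty_if_deletions_nonempty[OF assms psubset.hyps psubset.prems(1)] False by simp
    qed
  qed
qed

definition residue_classes :: "int \<Rightarrow> int set \<Rightarrow> real set" where
  "residue_classes m R = {real_of_int z | z. z mod m \<in> R}"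

lemma mem_residue_classes_iff:
  "x \<in> residue_classes m R \<longleftrightarrow> x \<in> \<int> \<and> \<lfloor>x\<rfloor> mod m \<in> R"
  unfolding residue_classes_def by (auto elim: Ints_cases)

lemma residue_classes_eq:
  "{real_of_int (s + m * n) | s n. s \<in> S} = residue_classes m ((\<lambda>s. s mod m) ` S)"
proof (intro equalityI subsetI)
  fix x assume "x \<in> {real_of_int (s + m * n) | s n. s \<in> S}"
  then obtain s n where "s \<in> S" and "x = real_of_int (s + m * n)"
    by blast
  moreover have "(s + m * n) mod m = s mod m"
    by simp
  ultimately show "x \<in> residue_classes m ((\<lambda>s. s mod m) ` S)"
    unfolding residue_classes_def by blast
next
  fix x assume "x \<in> residue_classes m ((\<lambda>s. s mod m) ` S)"
  then obtain z s where x: "x = real_of_int z" and "s \<in> S" and "z mod m = s mod m"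
    unfolding residue_classes_def by auto
  from \<open>z mod m = s mod m\<close> have "m dvd z - s"
    by (simp only: mod_eq_dvd_iff)
  then obtain n where "z - s = m * n"
    by (rule dvdE)
  then have "z = s + m * n"
    by simp
  with x \<open>s \<in> S\<close> show "x \<in> {real_of_int (s + m * n) | s n. s \<in> S}"
    by blast
qed

lemma uniform_discrete_cart_power_Ints:
  assumes "A \<subseteq> \<int>"
  shows "uniform_discrete (cart_power A :: (real^'n) set)"
proof (rule uniformI1[of 1])
  fix x y :: "real^'n"
  assume "x \<in> cart_power A" "y \<in> cart_power A" and "dist x y < 1"
  have "x $ i = y $ i" for i
  proof -
    have "x $ i \<in> \<int>" and "y $ i \<in> \<int>"
      using \<open>x \<in> cart_power A\<close> \<open>y \<in> cart_power A\<close> assms unfolding cart_power_def by auto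
    moreover have "\<bar>x $ i - y $ i\<bar> < 1"
      using dist_vec_nth_le[of x i y] \<open>dist x y < 1\<close> by (simp add: dist_real_def)
    ultimately show ?thesis
      using Ints_eq_abs_less1 by blast
  qed
  then show "x = y"
    by (simp add: vec_eq_iff)
qed simp

lemma inj_on_affine_mod_prime:
  fixes p :: nat and u v :: int
  assumes "prime p" and "\<not> int p dvd v"
  shows "inj_on (\<lambda>j. (u + j * v) mod int p) {0..<int p}"
proof (rule inj_onI)
  fix j1 j2 assume j: "j1 \<in> {0..<int p}" "j2 \<in> {0..<int p}"
    and "(u + j1 * v) mod int p = (u + j2 * v) mod int p"
  then have "int p dvd (u + j1 * v) - (u + j2 * v)"
    by (simp only: mod_eq_dvd_iff)
  moreover have "(u + j1 * v) - (u + j2 * v) = (j1 - j2) * v"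
    by (simp add: algebra_simps)
  ultimately have "int p dvd j1 - j2"
    using assms by (simp add: prime_dvd_mult_iff)
  then have "j1 mod int p = j2 mod int p"
    by (simp only: mod_eq_dvd_iff)
  then show "j1 = j2"
    using j by simp
qed

lemma card_shifts_leaving_residues_le:
  fixes p :: nat and u v :: int
  assumes "prime p" and "R \<subseteq> {0..<int p}" and "u mod int p \<in> R"
  shows "card {j \<in> {1..int p - 1}. (u + j * v) mod int p \<notin> R} \<le> p - card R"
proof (cases "int p dvd v")
  case True
  then obtain k where "v = int p * k"
    by (elim dvdE)
  then have "(u + j * v) mod int p = u mod int p" for j
    using mod_mult_self1[of u "j * k" "int p"] by (simp add: ac_simps)
  then show ?thesis
    using assms(3) by simp
next
  case False
  let ?f = "\<lambda>j. (u + j * v) mod int p"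
  let ?B = "{j \<in> {1..int p - 1}. ?f j \<notin> R}"
  have "inj_on ?f ?B"
    by (rule inj_on_subset[OF inj_on_affine_mod_prime[OF assms(1) False]]) auto
  moreover have "?f ` ?B \<subseteq> {0..<int p} - R"
    using prime_gt_0_nat[OF assms(1)] by auto
  ultimately have "card ?B \<le> card ({0..<int p} - R)"
    by (simp add: card_inj_on_le)
  also have "\<dots> = p - card R"
    using assms(2) by (simp add: card_Diff_subset finite_subset)
  finally show ?thesis .
qed

lemma exists_shift_preserving_residues:
  fixes p :: nat and u v :: "'n::finite \<Rightarrow> int"
  assumes "prime p" and "R \<subseteq> {0..<int p}" and "CARD('n) * (p - card R) < p - 1"
    and "\<And>i. u i mod int p \<in> R"
  shows "\<exists>j\<in>{1..int p - 1}. \<forall>i. (u i + j * v i) mod int p \<in> R"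
proof -
  define B where "B i = {j \<in> {1..int p - 1}. (u i + j * v i) mod int p \<notin> R}" for i
  have "card (\<Union>i. B i) \<le> (\<Sum>i\<in>UNIV. card (B i))"
    by (rule card_UN_le) simp
  also have "\<dots> \<le> (\<Sum>i\<in>(UNIV :: 'n set). p - card R)"
    by (rule sum_mono) (unfold B_def, rule card_shifts_leaving_residues_le[OF assms(1,2,4)])
  also have "\<dots> < p - 1"
    using assms(3) by simp
  also have "p - 1 = card {1..int p - 1}"
    by simp
  finally have "card (\<Union>i. B i) < card {1..int p - 1}" .
  moreover have "(\<Union>i. B i) \<subseteq> {1..int p - 1}"
    unfolding B_def by blast
  then have "finite (\<Union>i. B i)"
    by (rule finite_subset) simp
  ultimately have "\<not> {1..int p - 1} \<subseteq> (\<Union>i. B i)"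
    using card_mono by (meson not_le)
  then show ?thesis
    unfolding B_def by blast
qed

lemma congruent_pair_in_cart_power:
  fixes Z :: "(real^'n) set"
  assumes "finite R" and "Z \<subseteq> cart_power (residue_classes m R)" and "card R ^ CARD('n) < card Z"
  obtains z1 z2 where "z1 \<in> Z" and "z2 \<in> Z" and "z1 \<noteq> z2"
    and "\<forall>i. \<lfloor>z1 $ i\<rfloor> mod m = \<lfloor>z2 $ i\<rfloor> mod m"
proof -
  let ?r = "\<lambda>z::real^'n. \<lambda>i. \<lfloor>z $ i\<rfloor> mod m"
  have "\<not> inj_on ?r Z"
  proof
    assume "inj_on ?r Z"
    moreover have "?r ` Z \<subseteq> PiE UNIV (\<lambda>_. R)"
      using assms(2) unfolding cart_power_def mem_residue_classes_iff by auto
    ultimately have "card Z \<le> card (PiE (UNIV :: 'n set) (\<lambda>_. R))"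
      using assms(1) by (simp add: card_inj_on_le finite_PiE)
    then show False
      using assms(3) by (simp add: card_PiE)
  qed
  then obtain z1 z2 where "z1 \<in> Z" "z2 \<in> Z" "z1 \<noteq> z2" and "?r z1 = ?r z2"
    unfolding inj_on_def by blast
  from \<open>?r z1 = ?r z2\<close> have "\<forall>i. \<lfloor>z1 $ i\<rfloor> mod m = \<lfloor>z2 $ i\<rfloor> mod m"
    by (simp add: fun_eq_iff)
  with \<open>z1 \<in> Z\<close> \<open>z2 \<in> Z\<close> \<open>z1 \<noteq> z2\<close> show thesis
    by (rule that)
qed

lemma in_open_segment_scaled_step:
  fixes a b :: "'a::real_vector" and p :: nat and j :: int
  assumes "b \<noteq> 0" and "0 < j" and "j < int p"
  shows "a + of_int j *\<^sub>R b \<in> open_segment a (a + of_nat p *\<^sub>R b)"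
proof -
  define \<theta> where "\<theta> = real_of_int j / real p"
  have "0 < p"
    using assms(2,3) by simp
  then have "0 < \<theta>" and "\<theta> < 1"
    using assms(2,3) unfolding \<theta>_def by (auto simp: field_simps)
  moreover have "a + of_int j *\<^sub>R b = (1 - \<theta>) *\<^sub>R a + \<theta> *\<^sub>R (a + of_nat p *\<^sub>R b)"
    using \<open>0 < p\<close> unfolding \<theta>_def by (simp add: algebra_simps)
  moreover have "a \<noteq> a + of_nat p *\<^sub>R b"
    using assms(1) \<open>0 < p\<close> by simp
  ultimately show ?thesis
    unfolding in_segment by blast
qed

lemma mem_cart_power_residue_classes_iff:
  "z \<in> cart_power (residue_classes m R) \<longleftrightarrow> (\<exists>a. z = (\<chi> i. of_int (a i)) \<and> (\<forall>i. a i mod m \<in> R))"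
proof
  assume "z \<in> cart_power (residue_classes m R)"
  then have "z = (\<chi> i. of_int \<lfloor>z $ i\<rfloor>) \<and> (\<forall>i. \<lfloor>z $ i\<rfloor> mod m \<in> R)"
    unfolding cart_power_def mem_residue_classes_iff by (simp add: vec_eq_iff)
  then show "\<exists>a. z = (\<chi> i. of_int (a i)) \<and> (\<forall>i. a i mod m \<in> R)"
    by (rule exI[of _ "\<lambda>i. \<lfloor>z $ i\<rfloor>"])
next
  assume "\<exists>a. z = (\<chi> i. of_int (a i)) \<and> (\<forall>i. a i mod m \<in> R)"
  then show "z \<in> cart_power (residue_classes m R)"
    unfolding cart_power_def mem_residue_classes_iff by auto
qed

lemma open_segment_meets_residue_classes:
  fixes p :: nat and R :: "int set" and z1 z2 :: "real^'n"
  defines "X \<equiv> cart_power (residue_classes (int p) R) :: (real^'n) set"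
  assumes "prime p" and "R \<subseteq> {0..<int p}" and "CARD('n) * (p - card R) < p - 1"
    and "z1 \<in> X" and "z2 \<in> X" and "z1 \<noteq> z2"
    and congruent: "\<forall>i. \<lfloor>z1 $ i\<rfloor> mod int p = \<lfloor>z2 $ i\<rfloor> mod int p"
  shows "open_segment z1 z2 \<inter> X \<noteq> {}"
proof -
  obtain a where z1: "z1 = (\<chi> i. of_int (a i))" and a: "\<And>i. a i mod int p \<in> R"
    using assms(5) unfolding X_def mem_cart_power_residue_classes_iff by blast
  obtain b where z2: "z2 = (\<chi> i. of_int (b i))"
    using assms(6) unfolding X_def mem_cart_power_residue_classes_iff by blast
  define v where "v i = (b i - a i) div int p" for i
  define d where "d = (\<chi> i. real_of_int (v i))"
  have "b i = a i + int p * v i" for i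
  proof -
    have "b i mod int p = a i mod int p"
      using congruent unfolding z1 z2 by simp
    then have "int p dvd b i - a i"
      by (simp only: mod_eq_dvd_iff)
    then show ?thesis
      unfolding v_def by simp
  qed
  then have z2_eq: "z2 = z1 + of_nat p *\<^sub>R d"
    unfolding z1 z2 d_def by (simp add: vec_eq_iff)
  obtain j where "1 \<le> j" "j \<le> int p - 1" and j: "\<forall>i. (a i + j * v i) mod int p \<in> R"
    using exists_shift_preserving_residues[where u = a and v = v, OF assms(2,3,4) a] by auto
  have "z1 + of_int j *\<^sub>R d = (\<chi> i. of_int (a i + j * v i))"
    unfolding z1 d_def by (simp add: vec_eq_iff)
  then have "z1 + of_int j *\<^sub>R d \<in> X"
    using j unfolding X_def mem_cart_power_residue_classes_iff
    by (intro exI[of _ "\<lambda>i. a i + j * v i"]) simp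
  moreover have "d \<noteq> 0"
    using assms(7) z2_eq by auto
  then have "z1 + of_int j *\<^sub>R d \<in> open_segment z1 z2"
    unfolding z2_eq using \<open>1 \<le> j\<close> \<open>j \<le> int p - 1\<close> by (intro in_open_segment_scaled_step) auto
  ultimately show ?thesis
    by blast
qed

lemma segment_property_residue_classes:
  fixes p :: nat
  assumes "prime p" and "R \<subseteq> {0..<int p}" and "CARD('n) * (p - card R) < p - 1"
  shows "segment_property (cart_power (residue_classes (int p) R) :: (real^'n) set) (card R ^ CARD('n))"
  unfolding segment_property_def
proof (intro allI impI)
  fix Z :: "(real^'n) set"
  assume Z: "Z \<subseteq> cart_power (residue_classes (int p) R)" and "card R ^ CARD('n) < card Z"
  moreover have "finite R"
    using assms(2) finite_subset by blast
  ultimately obtain z1 z2 where "z1 \<in> Z" "z2 \<in> Z" "z1 \<noteq> z2"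
    and "\<forall>i. \<lfloor>z1 $ i\<rfloor> mod int p = \<lfloor>z2 $ i\<rfloor> mod int p"
    using congruent_pair_in_cart_power by blast
  moreover have "z1 \<in> cart_power (residue_classes (int p) R)" "z2 \<in> cart_power (residue_classes (int p) R)"
    using Z \<open>z1 \<in> Z\<close> \<open>z2 \<in> Z\<close> by blast+
  ultimately show "\<exists>z1\<in>Z. \<exists>z2\<in>Z. open_segment z1 z2 \<inter> cart_power (residue_classes (int p) R) \<noteq> {}"
    using open_segment_meets_residue_classes[OF assms] by blast
qed

lemma inj_on_mod_atLeastAtMost:
  "inj_on (\<lambda>s. s mod m) {1..m}" for m :: int
proof -
  have "s mod m = (if s = m then 0 else s)" if "s \<in> {1..m}" for s
    using that by auto
  then show ?thesis
    by (auto intro!: inj_onI split: if_splits)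
qed

lemma deficiency_bound_of_density:
  fixes d p c :: nat and \<alpha> :: real
  assumes "0 < d" and "0 < p" and "c \<le> p"
    and "\<alpha> > 1 - (1 / real d) * (1 - 1 / real p)" and "real c \<ge> \<alpha> * real p"
  shows "d * (p - c) < p - 1"
proof -
  have "real p - (real p - 1) / real d = (1 - (1 / real d) * (1 - 1 / real p)) * real p"
    using assms(1,2) by (simp add: field_simps)
  also have "\<dots> < \<alpha> * real p"
    using assms(2,4) by simp
  finally have "real p - (real p - 1) / real d < real c"
    using assms(5) by linarith
  then have "real d * (real p - real c) < real p - 1"
    using assms(1) by (simp add: field_simps)
  then have "real (d * (p - c)) < real (p - 1)"
    using assms(2,3) by (simp add: of_nat_diff)
  then show ?thesis
    by (simp only: of_nat_less_iff)
qed

theorem corollary4: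
  fixes p :: nat and S :: "int set" and \<alpha> :: real
  assumes "prime p"
    and "\<alpha> > 1 - (1 / real CARD('n)) * (1 - 1 / real p)"
    and "S \<subseteq> {1..int p}"
    and "real (card S) \<ge> \<alpha> * real p"
  shows "helly_number (cart_power {real_of_int (s + int p * n) | s n. s \<in> S} :: (real^'n) set)
           \<le> enat (card S ^ CARD('n))"
proof -
  let ?R = "(\<lambda>s. s mod int p) ` S"
  have "0 < p"
    using assms(1) by (rule prime_gt_0_nat)
  then have "?R \<subseteq> {0..<int p}"
    by auto
  have "card ?R = card S"
    using inj_on_subset[OF inj_on_mod_atLeastAtMost assms(3)] by (rule card_image)
  moreover have "card S \<le> p"
    using card_mono[OF finite_atLeastAtMost_int assms(3)] by simp
  ultimately have "CARD('n) * (p - card ?R) < p - 1"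
    using deficiency_bound_of_density[OF zero_less_card_finite \<open>0 < p\<close> _ assms(2,4)] by simp
  then have "segment_property (cart_power (residue_classes (int p) ?R) :: (real^'n) set)
      (card S ^ CARD('n))"
    using segment_property_residue_classes[OF assms(1) \<open>?R \<subseteq> {0..<int p}\<close>] \<open>card ?R = card S\<close>
    by simp
  moreover have "residue_classes (int p) ?R \<subseteq> \<int>"
    by (auto simp: mem_residue_classes_iff)
  ultimately have "helly_prop (cart_power (residue_classes (int p) ?R) :: (real^'n) set)
      (card S ^ CARD('n))"
    by (intro helly_prop_if_segment_property uniform_discrete_cart_power_Ints)
  then show ?thesis
    unfolding residue_classes_eq helly_number_def by (intro INF_lower) simp
qed

end
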